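(* Assume the setting described in the context. If $E$ is a closed unbounded subset of $\lambda$, then there are stationarily many $\delta\in S$ for which $E\cap C_\delta\notin I_\delta$.
   Context: Setting: $\mu$ is a singular cardinal with $\mathrm{cf}(\mu)=\aleph_0$, $\lambda=\mu^+$, $\sigma$ is regular with $\aleph_0<\sigma<\mu$, $S$ is a stationary subset of $\{\delta<\lambda:\mathrm{cf}(\delta)=\sigma\}$, and $\langle\mu_i:i<\omega\rangle$ is a strictly increasing sequence of regular cardinals cofinal in $\mu$ with $\sigma<\mu_0$. For $\delta\in S$, $c^0_\delta$ is the increasing enumeration of a club subset of $\delta$ of order type $\sigma$, and for every club $E\subseteq\lambda$ the set of $\delta\in S$ with $\mathrm{ran}(c^0_\delta)\subseteq E$ is stationary. $I(\delta,\epsilon,m)=(c^0_\delta(\omega\cdot\epsilon+m),c^0_\delta(\omega\cdot\epsilon+m+1)]$ for $\epsilon<\sigma$, $m<\omega$. $\langle C_\delta:\delta\in S\rangle$ satisfies: $C_\delta$ club in $\delta$; $\mathrm{ran}(c^0_\delta)\subseteq C_\delta$; $|C_\delta\cap I(\delta,\epsilon,m)|\leq\mu_m^+$; every $\alpha\in\mathrm{nacc}(C_\delta)\cap I(\delta,\epsilon,m)$ has $\mathrm{cf}(\alpha)>\mu_m^+$; for every club $E\subseteq\lambda$ there are stationarily many $\delta\in S$ with $E\cap\mathrm{nacc}(C_\delta)\cap I(\delta,\epsilon,m)\neq\emptyset$ for all $\epsilon<\sigma$, $m<\omega$. ($\mathrm{acc}(C)=\{\alpha<\delta:\alpha=\sup(\alpha\cap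 C)\}$, $\mathrm{nacc}(C)=C\setminus\mathrm{acc}(C)$.) For $\delta\in S$, $I_\delta$ is the ideal on $C_\delta$ generated by the sets $\{\gamma\in C_\delta:\gamma\in\mathrm{acc}(C_\delta)\text{ or }\mathrm{cf}(\gamma)<\alpha\text{ or }\gamma<\beta\}$ for $\alpha<\mu$, $\beta<\delta$. *)

theory Defs
  imports Main
begin

text \<open>Ordinals below \<lambda> are modelled as the elements of a well-ordered type 'a,
  ordered by its order; cardinalities are compared via card_of / ordLeq / ordLess.\<close>

definition card_le :: "'b set \<Rightarrow> 'c set \<Rightarrow> bool" where
  "card_le A B \<longleftrightarrow> (card_of A, card_of B) \<in> ordLeq"

definition card_lt :: "'b set \<Rightarrow> 'c set \<Rightarrow> bool" where
  "card_lt A B \<longleftrightarrow> (card_of A, card_of B) \<in> ordLess"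

definition is_card :: "'a::wellorder \<Rightarrow> bool" where
  "is_card \<kappa> \<longleftrightarrow> (\<forall>\<alpha><\<kappa>. card_lt {..<\<alpha>} {..<\<kappa>})"

definition cof :: "'a::wellorder \<Rightarrow> 'a" where
  "cof \<alpha> = (LEAST \<beta>. \<exists>X \<subseteq> {..<\<alpha>}. (\<forall>\<gamma><\<alpha>. \<exists>x\<in>X. \<gamma> \<le> x) \<and> card_le X {..<\<beta>})"

definition omega :: "'a::wellorder" where
  "omega = (LEAST \<alpha>. infinite {..<\<alpha>})"

definition csucc :: "'a::wellorder \<Rightarrow> 'a" where
  "csucc \<kappa> = (LEAST \<beta>. card_lt {..<\<kappa>} {..<\<beta>})"

definition osucc :: "'a::wellorder \<Rightarrow> 'a" where
  "osucc \<alpha> = (LEAST \<beta>. \<alpha> < \<beta>)"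

definition lim_or_zero :: "'a::wellorder \<Rightarrow> bool" where
  "lim_or_zero \<alpha> \<longleftrightarrow> (\<forall>\<gamma><\<alpha>. \<exists>\<beta>. \<gamma> < \<beta> \<and> \<beta> < \<alpha>)"

definition ord_iso_sets :: "'a::wellorder set \<Rightarrow> 'a set \<Rightarrow> bool" where
  "ord_iso_sets A B \<longleftrightarrow> (\<exists>f. bij_betw f A B \<and> strict_mono_on A f)"

text \<open>omega * eps = the eps-th ordinal that is zero or a limit.\<close>
definition om_times :: "'a::wellorder \<Rightarrow> 'a" where
  "om_times \<epsilon> = (THE \<alpha>. lim_or_zero \<alpha> \<and> ord_iso_sets {..<\<epsilon>} {\<beta>. \<beta> < \<alpha> \<and> lim_or_zero \<beta>})"

definition om_plus :: "'a::wellorder \<Rightarrow> nat \<Rightarrow> 'a" where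
  "om_plus \<epsilon> m = (osucc ^^ m) (om_times \<epsilon>)"

definition club :: "'a::wellorder set \<Rightarrow> bool" where
  "club E \<longleftrightarrow>
     (\<forall>\<alpha>. (\<exists>e\<in>E. e < \<alpha>) \<and> (\<forall>\<gamma><\<alpha>. \<exists>e\<in>E. \<gamma> < e \<and> e < \<alpha>) \<longrightarrow> \<alpha> \<in> E)
   \<and> (\<forall>\<gamma>. \<exists>e\<in>E. \<gamma> \<le> e)"

definition stationary :: "'a::wellorder set \<Rightarrow> bool" where
  "stationary S \<longleftrightarrow> (\<forall>E. club E \<longrightarrow> S \<inter> E \<noteq> {})"

definition club_in :: "'a::wellorder \<Rightarrow> 'a set \<Rightarrow> bool" where
  "club_in \<delta> C \<longleftrightarrow> C \<subseteq> {..<\<delta>}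
   \<and> (\<forall>\<alpha><\<delta>. (\<exists>c\<in>C. c < \<alpha>) \<and> (\<forall>\<gamma><\<alpha>. \<exists>c\<in>C. \<gamma> < c \<and> c < \<alpha>) \<longrightarrow> \<alpha> \<in> C)
   \<and> (\<forall>\<gamma><\<delta>. \<exists>c\<in>C. \<gamma> \<le> c)"

text \<open>acc(C) = {\<alpha> < \<delta>. \<alpha> = sup(\<alpha> \<inter> C)}, nacc(C) = C - acc(C).\<close>
definition acc :: "'a::wellorder \<Rightarrow> 'a set \<Rightarrow> 'a set" where
  "acc \<delta> C = {\<alpha>. \<alpha> < \<delta> \<and> (\<forall>\<gamma><\<alpha>. \<exists>c\<in>C. \<gamma> < c \<and> c < \<alpha>)}"

definition nacc :: "'a::wellorder \<Rightarrow> 'a set \<Rightarrow> 'a set" where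
  "nacc \<delta> C = C - acc \<delta> C"

definition Ival :: "('a::wellorder \<Rightarrow> 'a \<Rightarrow> 'a) \<Rightarrow> 'a \<Rightarrow> 'a \<Rightarrow> nat \<Rightarrow> 'a set" where
  "Ival c0 \<delta> \<epsilon> m = {\<alpha>. c0 \<delta> (om_plus \<epsilon> m) < \<alpha> \<and> \<alpha> \<le> c0 \<delta> (osucc (om_plus \<epsilon> m))}"

definition gen_set :: "'a::wellorder \<Rightarrow> 'a set \<Rightarrow> 'a \<Rightarrow> 'a \<Rightarrow> 'a set" where
  "gen_set \<delta> C \<alpha> \<beta> = {\<gamma>\<in>C. \<gamma> \<in> acc \<delta> C \<or> cof \<gamma> < \<alpha> \<or> \<gamma> < \<beta>}"

definition ideal_I :: "'a::wellorder \<Rightarrow> 'a \<Rightarrow> 'a set \<Rightarrow> 'a set set" where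
  "ideal_I \<mu> \<delta> C = {X. X \<subseteq> C \<and> (\<exists>F. finite F \<and> F \<subseteq> {(\<alpha>, \<beta>). \<alpha> < \<mu> \<and> \<beta> < \<delta>}
        \<and> X \<subseteq> (\<Union>(\<alpha>, \<beta>)\<in>F. gen_set \<delta> C \<alpha> \<beta>))}"

end

theory Submission
  imports Defs
begin

text \<open>Take \<delta> \<in> S guessed by E, so every interval I(\<delta>, \<epsilon>, m) contains some
  \<gamma> \<in> E \<inter> nacc(C_\<delta>). A set in I_\<delta> lies inside a single generator with parameters
  \<alpha> < \<mu> and \<beta> < \<delta>. Pick m with \<alpha> < \<mu>_m and \<epsilon> < \<sigma> with
  c0_\<delta>(\<omega>\<epsilon> + m) \<ge> \<beta>; such \<epsilon> exists because \<sigma> has uncountable cofinality, so every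
  \<xi> < \<sigma> lies below a limit ordinal \<omega>\<epsilon> < \<sigma>. The point \<gamma> chosen in I(\<delta>, \<epsilon>, m) is
  then a non-accumulation point above \<beta> of cofinality > (\<mu>_m)^+ > \<alpha>, so it escapes
  the generator.\<close>

lemma Well_order_le: "Well_order {(x::'a::wellorder, y). x \<le> y}"
proof -
  have "{(x::'a, y). x \<le> y} - Id = {(x, y). x < y}" by auto
  then have "wf ({(x::'a, y). x \<le> y} - Id)" using wellorder_class.wf by simp
  then show ?thesis
    unfolding well_order_on_def linear_order_on_def partial_order_on_def preorder_on_def
    by (auto simp: Field_def refl_on_def trans_def antisym_def total_on_def)
qed

lemma strict_mono_on_le_self:
  fixes h :: "'a::wellorder \<Rightarrow> 'a"
  assumes mono: "strict_mono_on D h" and into: "h ` D \<subseteq> D" and "x \<in> D"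
  shows "x \<le> h x"
  using \<open>x \<in> D\<close>
proof (induction x rule: less_induct)
  case (less x)
  show ?case
  proof (rule ccontr)
    assume "\<not> x \<le> h x"
    then have "h x < x" by simp
    moreover have "h x \<in> D" using into less.prems by blast
    ultimately have "h x \<le> h (h x)" and "h (h x) < h x"
      using less.IH mono less.prems by (auto simp: strict_mono_on_def)
    then show False by simp
  qed
qed

lemma strict_mono_on_inv_into:
  fixes f :: "'a::linorder \<Rightarrow> 'b::order"
  assumes "bij_betw f A B" "strict_mono_on A f"
  shows "strict_mono_on B (inv_into A f)"
proof (rule strict_mono_onI)
  fix x y assume "x \<in> B" "y \<in> B" "x < y"
  moreover have "inv_into A f x \<in> A" "inv_into A f y \<in> A"
    using \<open>x \<in> B\<close> \<open>y \<in> B\<close> bij_betw_apply[OF bij_betw_inv_into[OF assms(1)]] by auto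
  ultimately show "inv_into A f x < inv_into A f y"
    using assms by (simp add: strict_mono_on_less[symmetric] bij_betw_inv_into_right)
qed

lemma ord_iso_sets_sym:
  "ord_iso_sets A B \<Longrightarrow> ord_iso_sets B A"
  unfolding ord_iso_sets_def by (metis bij_betw_inv_into strict_mono_on_inv_into)

lemma ord_iso_sets_trans:
  assumes "ord_iso_sets A B" "ord_iso_sets B C"
  shows "ord_iso_sets A C"
proof -
  obtain f g where f: "bij_betw f A B" "strict_mono_on A f" and g: "bij_betw g B C" "strict_mono_on B g"
    using assms unfolding ord_iso_sets_def by blast
  have "strict_mono_on A (g \<circ> f)"
    using f g by (auto simp: strict_mono_on_def bij_betw_apply)
  then show ?thesis
    unfolding ord_iso_sets_def using bij_betw_trans[OF f(1) g(1)] by blast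
qed

lemma not_ord_iso_sets_initial_segment:
  fixes X :: "'a::wellorder set"
  assumes "x \<in> X"
  shows "\<not> ord_iso_sets X (X \<inter> {..<x})"
proof
  assume "ord_iso_sets X (X \<inter> {..<x})"
  then obtain h where h: "bij_betw h X (X \<inter> {..<x})" "strict_mono_on X h"
    unfolding ord_iso_sets_def by blast
  then have "h ` X \<subseteq> X" and "h x < x"
    using assms by (auto simp: bij_betw_def)
  with strict_mono_on_le_self[OF h(2) _ assms] show False by simp
qed

lemma embed_le_strict_mono_on:
  fixes f :: "'a::wellorder \<Rightarrow> 'b::wellorder"
  assumes "embed (Restr {(x, y). x \<le> y} A) (Restr {(x, y). x \<le> y} B) f"
  shows "strict_mono_on A f"
proof (rule strict_mono_onI)
  fix x y assume "x \<in> A" "y \<in> A" "x < y"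
  have "Field (Restr {(x::'a, y). x \<le> y} A) = A" by (auto simp: Field_def)
  then have "inj_on f A"
    using embed_inj_on[OF Well_order_Restr[OF Well_order_le] assms] by simp
  moreover have "(f x, f y) \<in> Restr {(x, y). x \<le> y} B"
    using embed_compat[OF assms] \<open>x \<in> A\<close> \<open>y \<in> A\<close> \<open>x < y\<close> by (auto simp: compat_def)
  ultimately show "f x < f y"
    using \<open>x \<in> A\<close> \<open>y \<in> A\<close> \<open>x < y\<close> by (auto simp: inj_on_def order.order_iff_strict)
qed

text \<open>A bounded set cannot absorb a strictly increasing copy of the whole type, so comparing
  it with the whole type as well-orders leaves only an embedding onto a proper initial segment.\<close>

lemma bounded_ord_iso_sets_lessThan:
  fixes A :: "'a::wellorder set"
  assumes "A \<subseteq> {..<b}"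
  shows "\<exists>\<epsilon>. ord_iso_sets {..<\<epsilon>} A"
proof -
  let ?r = "\<lambda>X. Restr {(x::'a, y). x \<le> y} X"
  have W: "Well_order (?r X)" for X by (rule Well_order_Restr[OF Well_order_le])
  have F: "Field (?r X) = X" for X by (auto simp: Field_def)
  have unbounded: "\<not> strict_mono_on UNIV g" if "range g \<subseteq> A" for g :: "'a \<Rightarrow> 'a"
  proof
    assume "strict_mono_on UNIV g"
    then have "b \<le> g b" by (rule strict_mono_on_le_self) auto
    moreover have "g b < b" using that assms by auto
    ultimately show False by simp
  qed
  from ordLeq_total[OF W W] show ?thesis
  proof
    assume "(?r A, ?r UNIV) \<in> ordLeq"
    then obtain f where e: "embed (?r A) (?r UNIV) f" unfolding ordLeq_def by blast
    have mono: "strict_mono_on A f" by (rule embed_le_strict_mono_on[OF e])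
    then have bij: "bij_betw f A (f ` A)"
      by (simp add: bij_betw_def strict_mono_on_imp_inj_on)
    have "wo_rel.ofilter (?r UNIV) (f ` A)"
      using embed_Field_ofilter[OF W W e] F by simp
    moreover have "wo_rel (?r UNIV)" using Well_order_le by (simp add: wo_rel_def)
    moreover have "underS (?r UNIV) a = {..<a}" for a by (auto simp: underS_def)
    ultimately have "(\<exists>a. f ` A = {..<a}) \<or> f ` A = UNIV"
      using wo_rel.ofilter_underS_Field F by metis
    moreover have "f ` A \<noteq> UNIV"
    proof
      assume "f ` A = UNIV"
      then show False
        using unbounded strict_mono_on_inv_into[OF bij mono] bij_betw_inv_into[OF bij]
        by (auto simp: bij_betw_def)
    qed
    ultimately obtain a where "f ` A = {..<a}" by blast
    then show ?thesis
      using ord_iso_sets_sym bij mono unfolding ord_iso_sets_def by metis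
  next
    assume "(?r UNIV, ?r A) \<in> ordLeq"
    then obtain f where e: "embed (?r UNIV) (?r A) f" unfolding ordLeq_def by blast
    have "f x \<in> A" for x
      using embed_compat[OF e] by (auto simp: compat_def)
    with unbounded embed_le_strict_mono_on[OF e] show ?thesis by blast
  qed
qed

lemma om_times_eqI:
  fixes \<alpha> \<epsilon> :: "'a::wellorder"
  assumes "lim_or_zero \<alpha>" "ord_iso_sets {..<\<epsilon>} {\<beta>. \<beta> < \<alpha> \<and> lim_or_zero \<beta>}"
  shows "om_times \<epsilon> = \<alpha>"
proof -
  have False
    if "lim_or_zero x" "x < y"
      and "ord_iso_sets {..<\<epsilon>} {\<beta>. \<beta> < x \<and> lim_or_zero \<beta>}"
      and "ord_iso_sets {..<\<epsilon>} {\<beta>. \<beta> < y \<and> lim_or_zero \<beta>}" for x y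
  proof -
    let ?L = "{\<beta>. \<beta> < y \<and> lim_or_zero \<beta>}"
    have "{\<beta>. \<beta> < x \<and> lim_or_zero \<beta>} = ?L \<inter> {..<x}" using \<open>x < y\<close> by auto
    moreover have "x \<in> ?L" using that by simp
    ultimately show False
      using that not_ord_iso_sets_initial_segment ord_iso_sets_trans ord_iso_sets_sym by metis
  qed
  then show ?thesis
    unfolding om_times_def using assms by (intro the_equality) (auto, metis linorder_neqE)
qed

lemma lim_or_zero_eq_om_times:
  fixes \<alpha> :: "'a::wellorder"
  assumes "lim_or_zero \<alpha>"
  shows "\<exists>\<epsilon>\<le>\<alpha>. om_times \<epsilon> = \<alpha>"
proof -
  let ?L = "{\<beta>. \<beta> < \<alpha> \<and> lim_or_zero \<beta>}"
  obtain \<epsilon> where iso: "ord_iso_sets {..<\<epsilon>} ?L"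
    using bounded_ord_iso_sets_lessThan[of ?L \<alpha>] by auto
  have "\<epsilon> \<le> \<alpha>"
  proof (rule ccontr)
    assume "\<not> \<epsilon> \<le> \<alpha>"
    then have "\<alpha> \<in> {..<\<epsilon>}" by simp
    obtain f where f: "bij_betw f {..<\<epsilon>} ?L" "strict_mono_on {..<\<epsilon>} f"
      using iso unfolding ord_iso_sets_def by blast
    then have "f ` {..<\<epsilon>} \<subseteq> {..<\<epsilon>}" and "f \<alpha> < \<alpha>"
      using \<open>\<alpha> \<in> {..<\<epsilon>}\<close> by (auto simp: bij_betw_def)
    with strict_mono_on_le_self[OF f(2) _ \<open>\<alpha> \<in> {..<\<epsilon>}\<close>] show False by simp
  qed
  with om_times_eqI[OF assms iso] show ?thesis by blast
qed

lemma less_osucc: "(x::'a::wellorder) < s \<Longrightarrow> x < osucc x"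
  unfolding osucc_def by (rule LeastI)

lemma osucc_le: "(x::'a::wellorder) < s \<Longrightarrow> osucc x \<le> s"
  unfolding osucc_def by (rule Least_le)

lemma infinite_lessThan_mono:
  fixes x y :: "'a::wellorder"
  shows "infinite {..<x} \<Longrightarrow> x \<le> y \<Longrightarrow> infinite {..<y}"
  by (meson finite_subset lessThan_subset_iff)

text \<open>An infinite cardinal is a limit ordinal: otherwise it would be equinumerous with its
  predecessor.\<close>

lemma osucc_less_card:
  fixes x s :: "'a::wellorder"
  assumes card: "is_card s" and inf: "infinite {..<s}" and "x < s"
  shows "osucc x < s"
proof (rule ccontr)
  assume "\<not> osucc x < s"
  then have "osucc x = s" using osucc_le[OF \<open>x < s\<close>] by simp
  then have s_eq: "{..<s} = insert x {..<x}"
    using \<open>x < s\<close> not_less_Least[of _ "\<lambda>\<beta>. x < \<beta>"] unfolding osucc_def by fastforce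
  then have "infinite {..<x}" using inf by simp
  then obtain h where "bij_betw h {..<x} (insert x {..<x})"
    using infinite_imp_bij_betw2 by fastforce
  then have "(card_of {..<x}, card_of {..<s}) \<in> ordIso"
    unfolding s_eq using card_of_ordIso by blast
  moreover have "(card_of {..<x}, card_of {..<s}) \<in> ordLess"
    using card \<open>x < s\<close> unfolding is_card_def card_lt_def by blast
  ultimately show False using not_ordLess_ordIso by blast
qed

lemma funpow_osucc_less_card:
  fixes x s :: "'a::wellorder"
  assumes "is_card s" "infinite {..<s}" "x < s"
  shows "(osucc ^^ m) x < s \<and> x \<le> (osucc ^^ m) x"
proof (induction m)
  case 0
  then show ?case using assms by simp
next
  case (Suc m)
  then show ?case
    using osucc_less_card[OF assms(1,2)] less_osucc[of "(osucc ^^ m) x" s] by auto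
qed

lemma countable_bounded_below_uncountable_cof:
  fixes s om :: "'a::wellorder" and q :: "nat \<Rightarrow> 'a"
  assumes "cof s = s" "infinite {..<om}" "om < s" and below: "\<forall>n. q n < s"
  shows "\<exists>\<gamma><s. \<forall>n. q n < \<gamma>"
proof (rule ccontr)
  assume "\<not> ?thesis"
  then have cofinal: "\<forall>\<gamma><s. \<exists>x\<in>range q. \<gamma> \<le> x" by (meson not_le rangeI)
  have "(card_of (range q), card_of (UNIV :: nat set)) \<in> ordLeq" by (rule card_of_image)
  moreover have "(card_of (UNIV :: nat set), card_of {..<om}) \<in> ordLeq"
    using assms(2) infinite_iff_card_of_nat by blast
  ultimately have "card_le (range q) {..<om}"
    unfolding card_le_def using ordLeq_transitive by blast
  moreover have "range q \<subseteq> {..<s}" using below by auto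
  ultimately have "cof s \<le> om"
    unfolding cof_def using cofinal by (intro Least_le) blast
  then show False using assms(1,3) by simp
qed

lemma lim_or_zero_Least_strict_upper_bound:
  fixes q :: "nat \<Rightarrow> 'a::wellorder"
  assumes "\<And>n. q n < q (Suc n)" and "\<forall>n. q n < \<gamma>"
  shows "lim_or_zero (LEAST \<alpha>. \<forall>n. q n < \<alpha>)"
  unfolding lim_or_zero_def
proof (intro allI impI)
  let ?l = "LEAST \<alpha>. \<forall>n. q n < \<alpha>"
  fix y assume "y < ?l"
  then have "\<not> (\<forall>n. q n < y)" by (rule not_less_Least)
  then obtain n where "y \<le> q n" by (auto simp: not_less)
  then have "y < q (Suc n)" using assms(1)[of n] by (rule le_less_trans)
  moreover have "q (Suc n) < ?l" using LeastI[of "\<lambda>\<alpha>. \<forall>n. q n < \<alpha>", OF assms(2)] by blast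
  ultimately show "\<exists>\<beta>. y < \<beta> \<and> \<beta> < ?l" by blast
qed

lemma lim_or_zero_between:
  fixes \<xi> s om :: "'a::wellorder"
  assumes card: "is_card s" and cof: "cof s = s" and om: "infinite {..<om}" "om < s"
    and "\<xi> < s"
  shows "\<exists>\<alpha>. lim_or_zero \<alpha> \<and> \<xi> \<le> \<alpha> \<and> \<alpha> < s"
proof -
  have inf: "infinite {..<s}" using infinite_lessThan_mono om by fastforce
  define q where "q n = (osucc ^^ n) \<xi>" for n
  have q_below: "\<forall>n. q n < s"
    using funpow_osucc_less_card[OF card inf \<open>\<xi> < s\<close>] by (simp add: q_def)
  have q_incr: "q n < q (Suc n)" for n
    using less_osucc[OF q_below[rule_format, of n]] by (simp add: q_def)
  obtain \<gamma> where "\<gamma> < s" "\<forall>n. q n < \<gamma>"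
    using countable_bounded_below_uncountable_cof[OF cof om q_below] by blast
  let ?\<alpha> = "LEAST \<alpha>. \<forall>n. q n < \<alpha>"
  have "\<forall>n. q n < ?\<alpha>" and "?\<alpha> \<le> \<gamma>"
    using LeastI[of "\<lambda>\<alpha>. \<forall>n. q n < \<alpha>"] Least_le[of "\<lambda>\<alpha>. \<forall>n. q n < \<alpha>"] \<open>\<forall>n. q n < \<gamma>\<close>
    by blast+
  moreover have "lim_or_zero ?\<alpha>"
    using lim_or_zero_Least_strict_upper_bound q_incr \<open>\<forall>n. q n < \<gamma>\<close> by blast
  ultimately show ?thesis
    using \<open>\<gamma> < s\<close> by (metis funpow_0 less_imp_le order.strict_trans1 q_def)
qed

lemma om_plus_above:
  fixes \<xi> s om :: "'a::wellorder"
  assumes "is_card s" "cof s = s" "infinite {..<om}" "om < s" "\<xi> < s"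
  shows "\<exists>\<epsilon><s. \<xi> \<le> om_plus \<epsilon> m \<and> om_plus \<epsilon> m < s"
proof -
  obtain \<alpha> where \<alpha>: "lim_or_zero \<alpha>" "\<xi> \<le> \<alpha>" "\<alpha> < s"
    using lim_or_zero_between[OF assms] by blast
  obtain \<epsilon> where "\<epsilon> \<le> \<alpha>" "om_times \<epsilon> = \<alpha>"
    using lim_or_zero_eq_om_times[OF \<alpha>(1)] by blast
  moreover have "infinite {..<s}" using infinite_lessThan_mono assms(3,4) by fastforce
  ultimately show ?thesis
    using funpow_osucc_less_card[OF assms(1) _ \<alpha>(3), of m] \<alpha>
    unfolding om_plus_def by (metis order.trans le_less_trans)
qed

lemma le_csucc:
  fixes k \<mu> :: "'a::wellorder"
  assumes "card_lt {..<k} {..<\<mu>}"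
  shows "k \<le> csucc k"
proof (rule ccontr)
  assume "\<not> ?thesis"
  then have "(card_of {..<csucc k}, card_of {..<k}) \<in> ordLeq"
    by (intro card_of_mono1) auto
  moreover have "card_lt {..<k} {..<csucc k}"
    unfolding csucc_def using assms by (rule LeastI)
  ultimately show False unfolding card_lt_def using not_ordLess_ordLeq by blast
qed

lemma stationary_mono: "stationary A \<Longrightarrow> A \<subseteq> B \<Longrightarrow> stationary B"
  unfolding stationary_def by blast

lemma gen_set_mono:
  "\<alpha> \<le> \<alpha>' \<Longrightarrow> \<beta> \<le> \<beta>' \<Longrightarrow> gen_set \<delta> C \<alpha> \<beta> \<subseteq> gen_set \<delta> C \<alpha>' \<beta>'"
  unfolding gen_set_def by auto

lemma ideal_I_subset_gen_set:
  fixes \<mu> \<delta> :: "'a::wellorder"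
  assumes "X \<in> ideal_I \<mu> \<delta> C" "\<alpha>\<^sub>0 < \<mu>" "\<beta>\<^sub>0 < \<delta>"
  obtains \<alpha> \<beta> where "\<alpha> < \<mu>" "\<beta> < \<delta>" "X \<subseteq> gen_set \<delta> C \<alpha> \<beta>"
proof -
  obtain F where F: "finite F" "F \<subseteq> {(\<alpha>, \<beta>). \<alpha> < \<mu> \<and> \<beta> < \<delta>}"
    and cover: "X \<subseteq> (\<Union>(\<alpha>, \<beta>)\<in>F. gen_set \<delta> C \<alpha> \<beta>)"
    using assms(1) unfolding ideal_I_def by blast
  define \<alpha> where "\<alpha> = Max (insert \<alpha>\<^sub>0 (fst ` F))"
  define \<beta> where "\<beta> = Max (insert \<beta>\<^sub>0 (snd ` F))"
  have "\<alpha> < \<mu>" "\<beta> < \<delta>"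
    unfolding \<alpha>_def \<beta>_def using F assms(2,3) by (auto simp: Max_less_iff)
  moreover have "gen_set \<delta> C a b \<subseteq> gen_set \<delta> C \<alpha> \<beta>" if "(a, b) \<in> F" for a b
    unfolding \<alpha>_def \<beta>_def using F(1) that
    by (intro gen_set_mono Max_ge) (auto intro: rev_image_eqI)
  ultimately show thesis using that cover by blast
qed

lemma guessed_not_in_ideal_I:
  fixes \<mu> \<sigma> \<delta> om :: "'a::wellorder" and mus :: "nat \<Rightarrow> 'a"
  assumes \<sigma>: "is_card \<sigma>" "cof \<sigma> = \<sigma>" "infinite {..<om}" "om < \<sigma>"
    and \<mu>: "is_card \<mu>" "\<forall>i. mus i < \<mu>" "\<forall>\<beta><\<mu>. \<exists>i. \<beta> < mus i"
    and c0_mono: "strict_mono_on {..<\<sigma>} (c0 \<delta>)"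
    and c0_club: "club_in \<delta> (c0 \<delta> ` {..<\<sigma>})"
    and C_cof: "\<forall>\<epsilon><\<sigma>. \<forall>m. \<forall>\<alpha>\<in>nacc \<delta> C \<inter> Ival c0 \<delta> \<epsilon> m. csucc (mus m) < cof \<alpha>"
    and guessed: "\<forall>\<epsilon><\<sigma>. \<forall>m. E \<inter> nacc \<delta> C \<inter> Ival c0 \<delta> \<epsilon> m \<noteq> {}"
  shows "E \<inter> C \<notin> ideal_I \<mu> \<delta> C"
proof
  assume "E \<inter> C \<in> ideal_I \<mu> \<delta> C"
  moreover have "c0 \<delta> om < \<delta>" using c0_club \<open>om < \<sigma>\<close> unfolding club_in_def by blast
  ultimately obtain a b where "a < \<mu>" "b < \<delta>" and cover: "E \<inter> C \<subseteq> gen_set \<delta> C a b"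
    using ideal_I_subset_gen_set \<mu>(2) by metis
  obtain m where "a < mus m" using \<mu>(3) \<open>a < \<mu>\<close> by blast
  obtain \<xi> where "\<xi> < \<sigma>" "b \<le> c0 \<delta> \<xi>"
    using c0_club \<open>b < \<delta>\<close> unfolding club_in_def by blast
  obtain \<epsilon> where "\<epsilon> < \<sigma>" "\<xi> \<le> om_plus \<epsilon> m" "om_plus \<epsilon> m < \<sigma>"
    using om_plus_above[OF \<sigma> \<open>\<xi> < \<sigma>\<close>] by blast
  obtain \<gamma> where \<gamma>: "\<gamma> \<in> E" "\<gamma> \<in> nacc \<delta> C" "\<gamma> \<in> Ival c0 \<delta> \<epsilon> m"
    using guessed \<open>\<epsilon> < \<sigma>\<close> by blast
  have "b < \<gamma>"
  proof -
    have "c0 \<delta> \<xi> \<le> c0 \<delta> (om_plus \<epsilon> m)"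
      using strict_mono_on_leD[OF c0_mono] \<open>\<xi> < \<sigma>\<close> \<open>\<xi> \<le> om_plus \<epsilon> m\<close> \<open>om_plus \<epsilon> m < \<sigma>\<close>
      by simp
    also have "\<dots> < \<gamma>" using \<gamma>(3) unfolding Ival_def by blast
    finally show ?thesis using \<open>b \<le> c0 \<delta> \<xi>\<close> by simp
  qed
  moreover have "a < cof \<gamma>"
  proof -
    have "card_lt {..<mus m} {..<\<mu>}" using \<mu>(1,2) unfolding is_card_def by blast
    then have "mus m \<le> csucc (mus m)" by (rule le_csucc)
    also have "\<dots> < cof \<gamma>" using C_cof \<open>\<epsilon> < \<sigma>\<close> \<gamma>(2,3) by blast
    finally show ?thesis using \<open>a < mus m\<close> by simp
  qed
  moreover have "\<gamma> \<in> C" "\<gamma> \<notin> acc \<delta> C" using \<gamma>(2) unfolding nacc_def by auto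
  ultimately show False using cover \<gamma>(1) unfolding gen_set_def by auto
qed

theorem proposition5p3:
  fixes \<mu> \<sigma> :: "'a::wellorder"
    and S :: "'a set"
    and mus :: "nat \<Rightarrow> 'a"
    and c0 :: "'a \<Rightarrow> 'a \<Rightarrow> 'a"
    and C :: "'a \<Rightarrow> 'a set"
    and E :: "'a set"
  assumes lambda_initial: "\<forall>\<alpha>::'a. card_lt {..<\<alpha>} (UNIV :: 'a set)"
    and lambda_succ: "(card_of (UNIV :: 'a set), cardSuc (card_of {..<\<mu>})) \<in> ordIso"
    and mu_card: "is_card \<mu>"
    and mu_cof: "cof \<mu> = omega"
    and sigma_regular: "is_card \<sigma> \<and> cof \<sigma> = \<sigma>"
    and sigma_unc: "omega < \<sigma>"
    and sigma_mu: "\<sigma> < \<mu>"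
    and S_cof: "S \<subseteq> {\<delta>. cof \<delta> = \<sigma>}"
    and S_stat: "stationary S"
    and mus_regular: "\<forall>i. is_card (mus i) \<and> cof (mus i) = mus i"
    and mus_incr: "strict_mono mus"
    and mus_below: "\<forall>i. mus i < \<mu>"
    and mus_cofinal: "\<forall>\<beta><\<mu>. \<exists>i. \<beta> < mus i"
    and sigma_mus: "\<sigma> < mus 0"
    and c0_mono: "\<forall>\<delta>\<in>S. strict_mono_on {..<\<sigma>} (c0 \<delta>)"
    and c0_club: "\<forall>\<delta>\<in>S. club_in \<delta> (c0 \<delta> ` {..<\<sigma>})"
    and c0_guess: "\<forall>D. club D \<longrightarrow> stationary {\<delta>\<in>S. c0 \<delta> ` {..<\<sigma>} \<subseteq> D}"
    and C_club: "\<forall>\<delta>\<in>S. club_in \<delta> (C \<delta>)"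
    and C_c0: "\<forall>\<delta>\<in>S. c0 \<delta> ` {..<\<sigma>} \<subseteq> C \<delta>"
    and C_size: "\<forall>\<delta>\<in>S. \<forall>\<epsilon><\<sigma>. \<forall>m.
                  card_le (C \<delta> \<inter> Ival c0 \<delta> \<epsilon> m) {..<csucc (mus m)}"
    and C_cof: "\<forall>\<delta>\<in>S. \<forall>\<epsilon><\<sigma>. \<forall>m. \<forall>\<alpha>\<in>nacc \<delta> (C \<delta>) \<inter> Ival c0 \<delta> \<epsilon> m.
                  csucc (mus m) < cof \<alpha>"
    and C_guess: "\<forall>D. club D \<longrightarrow> stationary {\<delta>\<in>S. \<forall>\<epsilon><\<sigma>. \<forall>m.
                  D \<inter> nacc \<delta> (C \<delta>) \<inter> Ival c0 \<delta> \<epsilon> m \<noteq> {}}"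
    and E_club: "club E"
  shows "stationary {\<delta>\<in>S. E \<inter> C \<delta> \<notin> ideal_I \<mu> \<delta> (C \<delta>)}"
proof -
  have "infinite (range mus)"
    using finite_imageD strict_mono_imp_inj_on[OF mus_incr] by blast
  moreover have "range mus \<subseteq> {..<\<mu>}" using mus_below by auto
  ultimately have "infinite {..<\<mu>}" using finite_subset by blast
  then have omega_inf: "infinite {..<omega :: 'a}" unfolding omega_def by (rule LeastI)
  have not_in_ideal: "E \<inter> C \<delta> \<notin> ideal_I \<mu> \<delta> (C \<delta>)"
    if "\<delta> \<in> S" "\<forall>\<epsilon><\<sigma>. \<forall>m. E \<inter> nacc \<delta> (C \<delta>) \<inter> Ival c0 \<delta> \<epsilon> m \<noteq> {}" for \<delta>
    using guessed_not_in_ideal_I[OF _ _ omega_inf sigma_unc mu_card mus_below mus_cofinal]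
      sigma_regular c0_mono c0_club C_cof that by blast
  show ?thesis
  proof (rule stationary_mono)
    show "stationary {\<delta>\<in>S. \<forall>\<epsilon><\<sigma>. \<forall>m. E \<inter> nacc \<delta> (C \<delta>) \<inter> Ival c0 \<delta> \<epsilon> m \<noteq> {}}"
      using C_guess E_club by blast
  qed (use not_in_ideal in blast)
qed

end
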